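(* Let $S$ be a semidomain. The following are equivalent: (a) $S$ is an FFS; (b) $S[x]$ is an FFS; (c) $S[x^{\pm1}]$ is an FFS.
   Context: A semidomain is a subset $S$ of an integral domain $R$ containing $0$ and $1$ and closed under addition and multiplication; $S^*=S\setminus\{0\}$ is a monoid under multiplication, with units forming $S^\times$; $b,c\in S^*$ are associates if each divides the other in $S^*$. An atom is a nonunit $a\in S^*$ such that $a=bc$ with $b,c\in S^*$ forces $b$ or $c$ to be a unit; $S$ is atomic if every nonunit of $S^*$ is a finite product of atoms. $S$ is a finite factorization semidomain (FFS) if $S$ is atomic and every element of $S^*$ has only finitely many factorizations into atoms, where factorizations are considered up to order and associates of the atoms (equivalently, every element of $S^*$ has only finitely many divisors in $S^*$ up to associates). $S[x]$ (resp. $S[x^{\pm1}]$) is the semidomain of polynomials (resp. Laurent polynomials) in $R[x]$ (resp. $R[x^{\pm1}]$) with coefficients in $S$. *)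

theory Defs
  imports "HOL-Computational_Algebra.Polynomial" "HOL-Computational_Algebra.Formal_Laurent_Series"
begin

definition semidomain :: "'a::idom set \<Rightarrow> bool" where
  "semidomain S \<longleftrightarrow> 0 \<in> S \<and> 1 \<in> S \<and>
     (\<forall>a\<in>S. \<forall>b\<in>S. a + b \<in> S) \<and> (\<forall>a\<in>S. \<forall>b\<in>S. a * b \<in> S)"

definition sd_star :: "'a::idom set \<Rightarrow> 'a set" where
  "sd_star S = S - {0}"

definition sd_dvd :: "'a::idom set \<Rightarrow> 'a \<Rightarrow> 'a \<Rightarrow> bool" where
  "sd_dvd S b c \<longleftrightarrow> b \<in> sd_star S \<and> c \<in> sd_star S \<and> (\<exists>d\<in>sd_star S. c = b * d)"

definition sd_unit :: "'a::idom set \<Rightarrow> 'a \<Rightarrow> bool" where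
  "sd_unit S u \<longleftrightarrow> u \<in> sd_star S \<and> (\<exists>v\<in>sd_star S. u * v = 1)"

definition sd_assoc :: "'a::idom set \<Rightarrow> 'a \<Rightarrow> 'a \<Rightarrow> bool" where
  "sd_assoc S b c \<longleftrightarrow> sd_dvd S b c \<and> sd_dvd S c b"

definition sd_atom :: "'a::idom set \<Rightarrow> 'a \<Rightarrow> bool" where
  "sd_atom S a \<longleftrightarrow> a \<in> sd_star S \<and> \<not> sd_unit S a \<and>
     (\<forall>b\<in>sd_star S. \<forall>c\<in>sd_star S. a = b * c \<longrightarrow> sd_unit S b \<or> sd_unit S c)"

definition sd_atomic :: "'a::idom set \<Rightarrow> bool" where
  "sd_atomic S \<longleftrightarrow> (\<forall>a\<in>sd_star S. \<not> sd_unit S a \<longrightarrow>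
     (\<exists>xs. xs \<noteq> [] \<and> (\<forall>x\<in>set xs. sd_atom S x) \<and> prod_list xs = a))"

text \<open>Factorizations of a (lists of atoms with product a), and their identification
  up to order and associates.\<close>
definition sd_factorizations :: "'a::idom set \<Rightarrow> 'a \<Rightarrow> 'a list set" where
  "sd_factorizations S a = {xs. (\<forall>x\<in>set xs. sd_atom S x) \<and> prod_list xs = a}"

definition sd_fact_equiv :: "'a::idom set \<Rightarrow> ('a list \<times> 'a list) set" where
  "sd_fact_equiv S = {(xs, ys). \<exists>zs. mset zs = mset ys \<and> list_all2 (sd_assoc S) xs zs}"

definition FFS :: "'a::idom set \<Rightarrow> bool" where
  "FFS S \<longleftrightarrow> sd_atomic S \<and>
     (\<forall>a\<in>sd_star S. finite (sd_factorizations S a // sd_fact_equiv S))"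

definition poly_semidomain :: "'a::idom set \<Rightarrow> 'a poly set" where
  "poly_semidomain S = {p. \<forall>n. coeff p n \<in> S}"

text \<open>S[x^{+-1}]: Laurent polynomials (formal Laurent series with finite support)
  with coefficients in S.\<close>
definition laurent_semidomain :: "'a::idom set \<Rightarrow> 'a fls set" where
  "laurent_semidomain S =
     {f. finite {n. fls_nth f n \<noteq> 0} \<and> (\<forall>n. fls_nth f n \<in> S)}"

end

theory Submission
  imports Defs "HOL-Computational_Algebra.Fraction_Field" "HOL-Computational_Algebra.Field_as_Ring"
    "HOL-Computational_Algebra.Polynomial_Factorial" "HOL-Computational_Algebra.Polynomial_FPS"
begin

text \<open>
  Having only finitely many factorizations is equivalent to every element of S* having only
  finitely many divisors up to associates: a divisor of a is associated to a subproduct of one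
  of the finitely many factorization classes of a; conversely, choosing representatives of the
  associate classes of divisors of a, the number of classes below a divisor drops strictly along
  proper divisors, which yields atomicity as well as a bound on the length of factorizations
  of a.

  A divisor g of f in S[x] is determined up to associates by the irreducible factors of g over
  the fraction field of R, a submultiset of those of f, together with the associate class of
  its leading coefficient. A Laurent polynomial is the unit x^k times the polynomial of its
  coefficients from the lowest one on, so divisors in S[x^{\<plusminus>1}] are governed by divisors
  in S[x]. Finally the constants embed S into both, with the leading and lowest coefficient as
  multiplicative retractions, and such an embedding pulls the divisor condition back to S.
\<close>

lemma finite_submultisets: "finite {M. M \<subseteq># N}"
proof -
  have "{M. M \<subseteq># N} \<subseteq> mset ` {xs. set xs \<subseteq> set_mset N \<and> length xs \<le> size N}"
  proof
    fix M assume "M \<in> {M. M \<subseteq># N}"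
    then have M: "M \<subseteq># N" by simp
    obtain xs where xs: "mset xs = M" using ex_mset by blast
    have "set xs \<subseteq> set_mset N" using M xs by (metis mset_subset_eqD set_mset_mset subsetI)
    moreover have "length xs \<le> size N" using M xs by (metis size_mset size_mset_mono)
    ultimately show "M \<in> mset ` {xs. set xs \<subseteq> set_mset N \<and> length xs \<le> size N}" using xs by blast
  qed
  moreover have "finite {xs. set xs \<subseteq> set_mset N \<and> length xs \<le> size N}"
    using finite_lists_length_le[of "set_mset N"] by simp
  ultimately show ?thesis using finite_subset by blast
qed

section \<open>Divisibility in a semidomain\<close>

lemma sd_star_iff: "x \<in> sd_star S \<longleftrightarrow> x \<in> S \<and> x \<noteq> 0"
  by (simp add: sd_star_def)

lemma sd_assoc_sym: "sd_assoc S a b \<Longrightarrow> sd_assoc S b a"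
  by (simp add: sd_assoc_def)

locale semidomain_set =
  fixes S :: "'a::idom set"
  assumes semidomain: "semidomain S"
begin

lemma zero_mem: "0 \<in> S" and one_mem: "1 \<in> S"
  and add_mem: "a \<in> S \<Longrightarrow> b \<in> S \<Longrightarrow> a + b \<in> S"
  and mult_mem: "a \<in> S \<Longrightarrow> b \<in> S \<Longrightarrow> a * b \<in> S"
  using semidomain unfolding semidomain_def by auto

lemma sum_mem: "(\<And>i. i \<in> A \<Longrightarrow> f i \<in> S) \<Longrightarrow> sum f A \<in> S"
  by (induction A rule: infinite_finite_induct) (auto intro: add_mem zero_mem)

lemma one_star [simp]: "1 \<in> sd_star S"
  using one_mem by (simp add: sd_star_iff)

lemma mult_star: "x \<in> sd_star S \<Longrightarrow> y \<in> sd_star S \<Longrightarrow> x * y \<in> sd_star S"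
  using mult_mem by (auto simp: sd_star_iff)

lemma prod_list_star: "(\<And>x. x \<in> set xs \<Longrightarrow> x \<in> sd_star S) \<Longrightarrow> prod_list xs \<in> sd_star S"
  by (induction xs) (auto intro: mult_star)

lemma sd_dvdI: "a \<in> sd_star S \<Longrightarrow> d \<in> sd_star S \<Longrightarrow> b = a * d \<Longrightarrow> sd_dvd S a b"
  using mult_star by (auto simp: sd_dvd_def)

lemma sd_dvd_refl: "a \<in> sd_star S \<Longrightarrow> sd_dvd S a a"
  by (rule sd_dvdI[of a 1]) auto

lemma sd_dvd_trans: "sd_dvd S a b \<Longrightarrow> sd_dvd S b c \<Longrightarrow> sd_dvd S a c"
proof -
  assume "sd_dvd S a b" "sd_dvd S b c"
  then obtain d e where "d \<in> sd_star S" "e \<in> sd_star S" "b = a * d" "c = b * e"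
    "a \<in> sd_star S" "c \<in> sd_star S"
    unfolding sd_dvd_def by blast
  then show ?thesis
    by (intro sd_dvdI[of a "d * e"]) (auto simp: mult.assoc intro: mult_star)
qed

lemma sd_assoc_refl: "a \<in> sd_star S \<Longrightarrow> sd_assoc S a a"
  by (simp add: sd_assoc_def sd_dvd_refl)

lemma sd_assoc_trans: "sd_assoc S a b \<Longrightarrow> sd_assoc S b c \<Longrightarrow> sd_assoc S a c"
  unfolding sd_assoc_def using sd_dvd_trans by blast

lemma sd_assoc_mult: "sd_assoc S a b \<Longrightarrow> sd_assoc S c d \<Longrightarrow> sd_assoc S (a * c) (b * d)"
proof -
  have dvd: "sd_dvd S (a * c) (b * d)" if "sd_dvd S a b" "sd_dvd S c d" for a b c d
  proof -
    from that obtain u v where "u \<in> sd_star S" "v \<in> sd_star S" "b = a * u" "d = c * v"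
      "a \<in> sd_star S" "c \<in> sd_star S" unfolding sd_dvd_def by blast
    then show ?thesis
      by (intro sd_dvdI[of _ "u * v"]) (auto intro: mult_star simp: ac_simps)
  qed
  assume "sd_assoc S a b" "sd_assoc S c d"
  then show ?thesis unfolding sd_assoc_def using dvd by blast
qed

lemma sd_unit_assoc_one: "sd_unit S u \<Longrightarrow> sd_assoc S u 1"
  unfolding sd_assoc_def sd_unit_def sd_dvd_def by (auto intro: mult_star)

lemma proper_sd_dvd_mult:
  assumes "a \<in> sd_star S" "c \<in> sd_star S" "\<not> sd_unit S c"
  shows "sd_dvd S a (a * c)" "\<not> sd_dvd S (a * c) a"
proof -
  show "sd_dvd S a (a * c)" using sd_dvdI[OF assms(1,2)] by simp
  show "\<not> sd_dvd S (a * c) a"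
  proof
    assume "sd_dvd S (a * c) a"
    then obtain d where d: "d \<in> sd_star S" "a = a * c * d" by (auto simp: sd_dvd_def)
    then have "c * d = 1" using assms(1) by (simp add: sd_star_iff mult.assoc)
    then show False using assms(2,3) d(1) unfolding sd_unit_def by blast
  qed
qed

lemma atom_star: "sd_atom S x \<Longrightarrow> x \<in> sd_star S"
  by (simp add: sd_atom_def)

lemma prod_atoms_star: "\<forall>x\<in>set xs. sd_atom S x \<Longrightarrow> prod_list xs \<in> sd_star S"
  by (auto intro: prod_list_star atom_star)

lemma sd_dvd_prod_list_member:
  assumes "\<forall>y\<in>set xs. y \<in> sd_star S" "x \<in> set xs"
  shows "sd_dvd S x (prod_list xs)"
proof (rule sd_dvdI)
  show "prod_list xs = x * prod_list (remove1 x xs)"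
    using assms(2) by (metis prod_mset_prod_list prod_mset.remove mset_remove1 set_mset_mset)
  show "prod_list (remove1 x xs) \<in> sd_star S"
    using assms(1) set_remove1_subset by (metis prod_list_star subsetD)
qed (use assms in auto)

lemma sd_fact_equiv_refl: "\<forall>x\<in>set xs. x \<in> sd_star S \<Longrightarrow> (xs, xs) \<in> sd_fact_equiv S"
  unfolding sd_fact_equiv_def by (auto simp: list_all2_conv_all_nth sd_assoc_refl)

lemma sd_fact_equiv_sym: "(xs, ys) \<in> sd_fact_equiv S \<Longrightarrow> (ys, xs) \<in> sd_fact_equiv S"
proof -
  assume "(xs, ys) \<in> sd_fact_equiv S"
  then obtain zs where zs: "mset zs = mset ys" "list_all2 (sd_assoc S) xs zs"
    by (auto simp: sd_fact_equiv_def)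
  have "list_all2 (sd_assoc S) zs xs"
    using zs(2) by (simp add: sd_assoc_sym list_all2_conv_all_nth)
  then obtain xs' where "list_all2 (sd_assoc S) ys xs'" "mset xs' = mset xs"
    using list_all2_reorder_left_invariance[of "sd_assoc S" zs xs ys] zs(1) by auto
  then show ?thesis by (auto simp: sd_fact_equiv_def)
qed

lemma sd_fact_equiv_trans:
  "(xs, ys) \<in> sd_fact_equiv S \<Longrightarrow> (ys, ws) \<in> sd_fact_equiv S \<Longrightarrow> (xs, ws) \<in> sd_fact_equiv S"
proof -
  assume "(xs, ys) \<in> sd_fact_equiv S" "(ys, ws) \<in> sd_fact_equiv S"
  then obtain zs us where zs: "mset zs = mset ys" "list_all2 (sd_assoc S) xs zs"
    and us: "mset us = mset ws" "list_all2 (sd_assoc S) ys us" by (auto simp: sd_fact_equiv_def)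
  obtain us' where "list_all2 (sd_assoc S) zs us'" "mset us' = mset us"
    using list_all2_reorder_left_invariance[OF us(2) zs(1)] by blast
  moreover have "list_all2 (sd_assoc S) xs us'"
    using zs(2) calculation(1) list_all2_trans sd_assoc_trans by blast
  ultimately show ?thesis using us(1) by (auto simp: sd_fact_equiv_def)
qed

lemma sd_fact_equiv_Image_eq:
  "(xs, ys) \<in> sd_fact_equiv S \<Longrightarrow> sd_fact_equiv S `` {xs} = sd_fact_equiv S `` {ys}"
  using sd_fact_equiv_trans sd_fact_equiv_sym by blast

lemma sd_fact_equiv_submset:
  assumes "(zs, ws) \<in> sd_fact_equiv S" "N \<subseteq># mset ws"
  shows "\<exists>M. M \<subseteq># mset zs \<and> sd_assoc S (prod_mset M) (prod_mset N)"
proof -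
  have "\<exists>M. M \<subseteq># mset as \<and> sd_assoc S (prod_mset M) (prod_mset N)"
    if "list_all2 (sd_assoc S) as bs" "N \<subseteq># mset bs" for as bs N
    using that
  proof (induction as bs arbitrary: N rule: list_all2_induct)
    case Nil
    then show ?case by (intro exI[of _ "{#}"]) (simp add: sd_assoc_refl)
  next
    case (Cons a as b bs)
    show ?case
    proof (cases "b \<in># N")
      case True
      then have "N - {#b#} \<subseteq># mset bs"
        using Cons.prems by (metis insert_DiffM add_mset_remove_trivial insert_subset_eq_iff mset.simps(2))
      then obtain M where M: "M \<subseteq># mset as" "sd_assoc S (prod_mset M) (prod_mset (N - {#b#}))"
        using Cons.IH by blast
      have "sd_assoc S (a * prod_mset M) (b * prod_mset (N - {#b#}))"
        using sd_assoc_mult Cons.hyps(1) M(2) by blast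
      then show ?thesis
        using M(1) True by (intro exI[of _ "add_mset a M"]) (auto simp: prod_mset.remove)
    next
      case False
      then have "N \<subseteq># mset bs"
        using Cons.prems by (metis inter_add_left1 subset_mset.inf.absorb_iff2 mset.simps(2))
      then obtain M where "M \<subseteq># mset as" "sd_assoc S (prod_mset M) (prod_mset N)"
        using Cons.IH by blast
      then show ?thesis by (intro exI[of _ M]) (auto intro: subset_mset.order_trans)
    qed
  qed
  moreover obtain bs where "mset bs = mset ws" "list_all2 (sd_assoc S) zs bs"
    using assms(1) by (auto simp: sd_fact_equiv_def)
  ultimately show ?thesis using assms(2) by simp
qed

end

section \<open>Finite factorization and finitely many divisors\<close>

definition finite_divisors :: "'a::idom set \<Rightarrow> bool" where
  "finite_divisors S \<longleftrightarrow>
     (\<forall>a\<in>sd_star S. \<exists>D. finite D \<and> (\<forall>d. sd_dvd S d a \<longrightarrow> (\<exists>e\<in>D. sd_assoc S d e)))"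

lemma finite_divisorsE:
  assumes "finite_divisors S" "a \<in> sd_star S"
  obtains rep where "finite (rep ` {d. sd_dvd S d a})"
    "\<And>d. sd_dvd S d a \<Longrightarrow> sd_assoc S d (rep d)"
proof -
  obtain D where D: "finite D" "\<forall>d. sd_dvd S d a \<longrightarrow> (\<exists>e\<in>D. sd_assoc S d e)"
    using assms unfolding finite_divisors_def by blast
  define rep where "rep d = (SOME e. e \<in> D \<and> sd_assoc S d e)" for d
  have rep: "rep d \<in> D \<and> sd_assoc S d (rep d)" if "sd_dvd S d a" for d
    unfolding rep_def using someI_ex[of "\<lambda>e. e \<in> D \<and> sd_assoc S d e"] D(2) that by blast
  have "rep ` {d. sd_dvd S d a} \<subseteq> D" using rep by blast
  then have "finite (rep ` {d. sd_dvd S d a})" using D(1) finite_subset by blast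
  then show thesis by (rule that) (use rep in blast)
qed

lemma finite_divisorsI:
  assumes "\<And>a. a \<in> sd_star S \<Longrightarrow> \<exists>\<phi> :: 'a::idom \<Rightarrow> 'b. finite (\<phi> ` {d. sd_dvd S d a}) \<and>
     (\<forall>d1 d2. sd_dvd S d1 a \<longrightarrow> sd_dvd S d2 a \<longrightarrow> \<phi> d1 = \<phi> d2 \<longrightarrow> sd_assoc S d1 d2)"
  shows "finite_divisors S"
  unfolding finite_divisors_def
proof
  fix a assume "a \<in> sd_star S"
  then obtain \<phi> :: "'a \<Rightarrow> 'b" where fin: "finite (\<phi> ` {d. sd_dvd S d a})"
    and inj: "\<forall>d1 d2. sd_dvd S d1 a \<longrightarrow> sd_dvd S d2 a \<longrightarrow> \<phi> d1 = \<phi> d2 \<longrightarrow> sd_assoc S d1 d2"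
    using assms by blast
  define pick where "pick y = (SOME d. sd_dvd S d a \<and> \<phi> d = y)" for y
  show "\<exists>D. finite D \<and> (\<forall>d. sd_dvd S d a \<longrightarrow> (\<exists>e\<in>D. sd_assoc S d e))"
  proof (intro exI conjI allI impI)
    show "finite (pick ` \<phi> ` {d. sd_dvd S d a})" using fin by blast
    fix d assume d: "sd_dvd S d a"
    then have "sd_dvd S (pick (\<phi> d)) a \<and> \<phi> (pick (\<phi> d)) = \<phi> d"
      unfolding pick_def using someI[of "\<lambda>x. sd_dvd S x a \<and> \<phi> x = \<phi> d" d] by simp
    then have "sd_assoc S d (pick (\<phi> d))" using inj d by metis
    then show "\<exists>e\<in>pick ` \<phi> ` {d. sd_dvd S d a}. sd_assoc S d e" using d by blast
  qed
qed

context semidomain_set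
begin

lemma assoc_if_same_rep:
  assumes "\<And>d. sd_dvd S d a \<Longrightarrow> sd_assoc S d (rep d)" "sd_dvd S x a" "sd_dvd S y a" "rep x = rep y"
  shows "sd_assoc S x y"
  using assms sd_assoc_trans[OF _ sd_assoc_sym] by metis

lemma card_rep_proper_divisors_less:
  assumes rep: "\<And>d. sd_dvd S d a \<Longrightarrow> sd_assoc S d (rep d)"
    and fin: "finite (rep ` {d. sd_dvd S d a})"
    and "sd_dvd S d a" "sd_dvd S b d" "\<not> sd_dvd S d b"
  shows "card (rep ` {e. sd_dvd S e b}) < card (rep ` {e. sd_dvd S e d})"
proof (rule psubset_card_mono)
  have "{e. sd_dvd S e d} \<subseteq> {e. sd_dvd S e a}"
    using sd_dvd_trans[OF _ assms(3)] by blast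
  then show "finite (rep ` {e. sd_dvd S e d})"
    using fin by (meson finite_subset image_mono)
  have "rep d \<notin> rep ` {e. sd_dvd S e b}"
  proof
    assume "rep d \<in> rep ` {e. sd_dvd S e b}"
    then obtain e where e: "sd_dvd S e b" "rep d = rep e" by blast
    then have "sd_dvd S e a" using sd_dvd_trans[OF e(1) sd_dvd_trans[OF assms(4,3)]] by blast
    then have "sd_assoc S d e" using assoc_if_same_rep[OF rep assms(3) _ e(2)] by blast
    then show False using sd_dvd_trans[OF _ e(1), of d] assms(5) unfolding sd_assoc_def by blast
  qed
  moreover have "rep d \<in> rep ` {e. sd_dvd S e d}"
    using sd_dvd_refl assms(3) by (auto simp: sd_dvd_def)
  moreover have "rep ` {e. sd_dvd S e b} \<subseteq> rep ` {e. sd_dvd S e d}"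
    using sd_dvd_trans[OF _ assms(4)] by blast
  ultimately show "rep ` {e. sd_dvd S e b} \<subset> rep ` {e. sd_dvd S e d}" by blast
qed

lemma divisor_factors_into_atoms:
  assumes rep: "\<And>d. sd_dvd S d a \<Longrightarrow> sd_assoc S d (rep d)"
    and fin: "finite (rep ` {d. sd_dvd S d a})"
  shows "sd_dvd S d a \<Longrightarrow> \<not> sd_unit S d \<Longrightarrow>
    \<exists>xs. xs \<noteq> [] \<and> (\<forall>x\<in>set xs. sd_atom S x) \<and> prod_list xs = d"
proof (induction "card (rep ` {e. sd_dvd S e d})" arbitrary: d rule: less_induct)
  case less
  show ?case
  proof (cases "sd_atom S d")
    case True
    then show ?thesis by (intro exI[of _ "[d]"]) auto
  next
    case False
    then obtain b c where bc: "b \<in> sd_star S" "c \<in> sd_star S" "d = b * c"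
      "\<not> sd_unit S b" "\<not> sd_unit S c"
      using less.prems unfolding sd_atom_def sd_dvd_def by blast
    have b: "sd_dvd S b d" "\<not> sd_dvd S d b"
      using proper_sd_dvd_mult[OF bc(1,2,5)] bc(3) by simp_all
    have c: "sd_dvd S c d" "\<not> sd_dvd S d c"
      using proper_sd_dvd_mult[OF bc(2,1,4)] bc(3) by (simp_all add: mult.commute)
    obtain xs where "xs \<noteq> []" "\<forall>x\<in>set xs. sd_atom S x" "prod_list xs = b"
      using less.hyps[OF card_rep_proper_divisors_less[OF rep fin less.prems(1) b]
        sd_dvd_trans[OF b(1) less.prems(1)] bc(4)] by blast
    moreover obtain ys where "\<forall>x\<in>set ys. sd_atom S x" "prod_list ys = c"
      using less.hyps[OF card_rep_proper_divisors_less[OF rep fin less.prems(1) c]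
        sd_dvd_trans[OF c(1) less.prems(1)] bc(5)] by blast
    ultimately show ?thesis using bc(3) by (intro exI[of _ "xs @ ys"]) auto
  qed
qed

lemma finite_divisors_atomic:
  assumes "finite_divisors S"
  shows "sd_atomic S"
  unfolding sd_atomic_def
proof (intro ballI impI)
  fix a assume a: "a \<in> sd_star S" "\<not> sd_unit S a"
  obtain rep where "finite (rep ` {d. sd_dvd S d a})" "\<And>d. sd_dvd S d a \<Longrightarrow> sd_assoc S d (rep d)"
    using finite_divisorsE[OF assms a(1)] by blast
  then show "\<exists>xs. xs \<noteq> [] \<and> (\<forall>x\<in>set xs. sd_atom S x) \<and> prod_list xs = a"
    using divisor_factors_into_atoms sd_dvd_refl[OF a(1)] a(2) by blast
qed

lemma length_factorization_le_card_rep: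
  assumes rep: "\<And>d. sd_dvd S d a \<Longrightarrow> sd_assoc S d (rep d)"
    and fin: "finite (rep ` {d. sd_dvd S d a})"
  shows "\<forall>x\<in>set xs. sd_atom S x \<Longrightarrow> sd_dvd S (prod_list xs) a \<Longrightarrow>
    length xs \<le> card (rep ` {e. sd_dvd S e (prod_list xs)})"
proof (induction xs)
  case (Cons x xs)
  have star: "x \<in> sd_star S" "prod_list xs \<in> sd_star S"
    using Cons.prems(1) atom_star prod_atoms_star by simp_all
  have not_unit: "\<not> sd_unit S x"
    using Cons.prems(1) unfolding sd_atom_def by simp
  have xs_dvd: "sd_dvd S (prod_list xs) (prod_list (x # xs))"
    and "\<not> sd_dvd S (prod_list (x # xs)) (prod_list xs)"
    using proper_sd_dvd_mult[OF star(2,1) not_unit] by (simp_all add: mult.commute)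
  then have "card (rep ` {e. sd_dvd S e (prod_list xs)}) <
      card (rep ` {e. sd_dvd S e (prod_list (x # xs))})"
    using card_rep_proper_divisors_less[OF rep fin Cons.prems(2) xs_dvd] by simp
  moreover have "length xs \<le> card (rep ` {e. sd_dvd S e (prod_list xs)})"
    using Cons.IH Cons.prems(1) sd_dvd_trans[OF xs_dvd Cons.prems(2)] by simp
  ultimately show ?case by simp
qed simp

lemma finite_divisors_finite_factorizations:
  assumes "finite_divisors S" "a \<in> sd_star S"
  shows "finite (sd_factorizations S a // sd_fact_equiv S)"
proof -
  obtain rep where fin: "finite (rep ` {d. sd_dvd S d a})"
    and rep: "\<And>d. sd_dvd S d a \<Longrightarrow> sd_assoc S d (rep d)"
    using finite_divisorsE[OF assms] by blast
  let ?R = "rep ` {d. sd_dvd S d a}" and ?r = "sd_fact_equiv S"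
  have "sd_factorizations S a // ?r \<subseteq> (\<lambda>ys. ?r `` {ys}) ` {ys. set ys \<subseteq> ?R \<and> length ys \<le> card ?R}"
  proof
    fix q assume "q \<in> sd_factorizations S a // ?r"
    then obtain xs where q: "q = ?r `` {xs}" and atoms: "\<forall>x\<in>set xs. sd_atom S x"
      and prod: "prod_list xs = a"
      unfolding quotient_def sd_factorizations_def by blast
    have "\<forall>x\<in>set xs. x \<in> sd_star S" using atoms atom_star by blast
    then have dvd: "sd_dvd S x a" if "x \<in> set xs" for x
      using sd_dvd_prod_list_member that prod by blast
    then have "list_all2 (sd_assoc S) xs (map rep xs)"
      using rep by (auto simp: list_all2_conv_all_nth)
    then have "(xs, map rep xs) \<in> ?r" unfolding sd_fact_equiv_def by blast
    then have "q = ?r `` {map rep xs}" using q sd_fact_equiv_Image_eq by simp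
    moreover have "length xs \<le> card ?R"
      using length_factorization_le_card_rep[OF rep fin atoms] sd_dvd_refl[OF assms(2)] prod by simp
    ultimately show "q \<in> (\<lambda>ys. ?r `` {ys}) ` {ys. set ys \<subseteq> ?R \<and> length ys \<le> card ?R}"
      using dvd by (intro image_eqI[of _ _ "map rep xs"]) auto
  qed
  moreover have "finite {ys. set ys \<subseteq> ?R \<and> length ys \<le> card ?R}"
    using finite_lists_length_le[OF fin] by simp
  ultimately show ?thesis using finite_subset by blast
qed

text \<open>If neither d nor its cofactor is a unit, concatenating factorizations of the two gives the
  required factorization of a.\<close>

lemma divisor_assoc_subproduct:
  assumes "sd_atomic S" "sd_dvd S d a"
  obtains "sd_assoc S d 1" | "sd_assoc S d a"
    | xs where "xs \<in> sd_factorizations S a"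
      "\<And>zs. (zs, xs) \<in> sd_fact_equiv S \<Longrightarrow> \<exists>M. M \<subseteq># mset zs \<and> sd_assoc S d (prod_mset M)"
proof -
  obtain e where de: "d \<in> sd_star S" "e \<in> sd_star S" "a = d * e"
    using assms(2) by (auto simp: sd_dvd_def)
  have factor: "\<exists>xs. (\<forall>x\<in>set xs. sd_atom S x) \<and> prod_list xs = x"
    if "x \<in> sd_star S" "\<not> sd_unit S x" for x
    using assms(1) that unfolding sd_atomic_def by blast
  consider "sd_unit S d" | "sd_unit S e" | "\<not> sd_unit S d" "\<not> sd_unit S e" by blast
  then show thesis
  proof cases
    case 1
    then show thesis using sd_unit_assoc_one that(1) by blast
  next
    case 2
    then obtain v where "v \<in> sd_star S" "e * v = 1" unfolding sd_unit_def by blast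
    then have "sd_dvd S a d" using de by (intro sd_dvdI[of a v]) (auto simp: mult.assoc mult_star)
    then show thesis using assms(2) that(2) unfolding sd_assoc_def by blast
  next
    case 3
    obtain xs where xs: "\<forall>x\<in>set xs. sd_atom S x" "prod_list xs = d"
      using factor[OF de(1) 3(1)] by blast
    obtain ys where ys: "\<forall>x\<in>set ys. sd_atom S x" "prod_list ys = e"
      using factor[OF de(2) 3(2)] by blast
    have "xs @ ys \<in> sd_factorizations S a" using xs ys de by (auto simp: sd_factorizations_def)
    moreover have "\<exists>M. M \<subseteq># mset zs \<and> sd_assoc S d (prod_mset M)"
      if zs: "(zs, xs @ ys) \<in> sd_fact_equiv S" for zs
    proof -
      obtain M where "M \<subseteq># mset zs" "sd_assoc S (prod_mset M) (prod_mset (mset xs))"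
        using sd_fact_equiv_submset[OF zs, of "mset xs"] by auto
      then show ?thesis using xs(2) sd_assoc_sym by (auto simp: prod_mset_prod_list)
    qed
    ultimately show thesis using that(3) by blast
  qed
qed

lemma FFS_finite_divisors:
  assumes "FFS S"
  shows "finite_divisors S"
  unfolding finite_divisors_def
proof
  fix a assume a: "a \<in> sd_star S"
  let ?r = "sd_fact_equiv S" and ?F = "sd_factorizations S a"
  define rep where "rep q = (SOME xs. xs \<in> q)" for q :: "'a list set"
  have rep: "(rep (?r `` {xs}), xs) \<in> ?r" if "xs \<in> ?F" for xs
  proof -
    have "(xs, xs) \<in> ?r"
      using that by (auto simp: sd_factorizations_def intro: sd_fact_equiv_refl atom_star)
    then have "rep (?r `` {xs}) \<in> ?r `` {xs}" unfolding rep_def by (auto intro: someI)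
    then show ?thesis using sd_fact_equiv_sym by blast
  qed
  define D where "D = {a, 1} \<union> (\<Union>q\<in>?F // ?r. prod_mset ` {M. M \<subseteq># mset (rep q)})"
  have "finite D"
    using assms a finite_submultisets unfolding D_def FFS_def by auto
  moreover have "\<exists>e\<in>D. sd_assoc S d e" if d: "sd_dvd S d a" for d
  proof (rule divisor_assoc_subproduct[OF _ d])
    show "sd_atomic S" using assms unfolding FFS_def by blast
    show "sd_assoc S d 1 \<Longrightarrow> ?thesis" "sd_assoc S d a \<Longrightarrow> ?thesis" unfolding D_def by blast+
    fix xs assume xs: "xs \<in> ?F"
      "\<And>zs. (zs, xs) \<in> ?r \<Longrightarrow> \<exists>M. M \<subseteq># mset zs \<and> sd_assoc S d (prod_mset M)"
    then obtain M where "M \<subseteq># mset (rep (?r `` {xs}))" "sd_assoc S d (prod_mset M)"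
      using rep by blast
    moreover have "?r `` {xs} \<in> ?F // ?r" using xs(1) by (auto simp: quotient_def)
    ultimately show ?thesis unfolding D_def by blast
  qed
  ultimately show "\<exists>D. finite D \<and> (\<forall>d. sd_dvd S d a \<longrightarrow> (\<exists>e\<in>D. sd_assoc S d e))" by blast
qed

lemma FFS_iff_finite_divisors: "FFS S \<longleftrightarrow> finite_divisors S"
  using FFS_finite_divisors finite_divisors_atomic finite_divisors_finite_factorizations
  unfolding FFS_def by blast

lemma sd_dvd_reflect:
  fixes S' :: "'b::idom set" and h :: "'a \<Rightarrow> 'b" and r :: "'b \<Rightarrow> 'a"
  assumes h_star: "\<And>x. x \<in> sd_star S \<Longrightarrow> h x \<in> sd_star S'"
    and r_star: "\<And>y. y \<in> sd_star S' \<Longrightarrow> r y \<in> sd_star S"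
    and r_mult: "\<And>x y. x \<in> sd_star S' \<Longrightarrow> y \<in> sd_star S' \<Longrightarrow> r (x * y) = r x * r y"
    and r_h: "\<And>x. x \<in> sd_star S \<Longrightarrow> sd_assoc S (r (h x)) x"
    and d: "d \<in> sd_star S" "a \<in> sd_star S" "sd_dvd S' (h d) (h a)"
  shows "sd_dvd S d a"
proof -
  obtain w where w: "w \<in> sd_star S'" "h a = h d * w" using d(3) unfolding sd_dvd_def by blast
  then have "r (h a) = r (h d) * r w" using r_mult h_star d(1) by simp
  then have "sd_dvd S (r (h d)) (r (h a))" using sd_dvdI r_star h_star w(1) d(1) by blast
  moreover have "sd_dvd S d (r (h d))" "sd_dvd S (r (h a)) a"
    using r_h d(1,2) unfolding sd_assoc_def by blast+
  ultimately show ?thesis using sd_dvd_trans by blast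
qed

lemma finite_divisors_pullback:
  fixes S' :: "'b::idom set" and h :: "'a \<Rightarrow> 'b" and r :: "'b \<Rightarrow> 'a"
  assumes "semidomain S'" "finite_divisors S'"
    and h_star: "\<And>x. x \<in> sd_star S \<Longrightarrow> h x \<in> sd_star S'"
    and h_mult: "\<And>x y. x \<in> sd_star S \<Longrightarrow> y \<in> sd_star S \<Longrightarrow> h (x * y) = h x * h y"
    and r_star: "\<And>y. y \<in> sd_star S' \<Longrightarrow> r y \<in> sd_star S"
    and r_mult: "\<And>x y. x \<in> sd_star S' \<Longrightarrow> y \<in> sd_star S' \<Longrightarrow> r (x * y) = r x * r y"
    and r_h: "\<And>x. x \<in> sd_star S \<Longrightarrow> sd_assoc S (r (h x)) x"
  shows "finite_divisors S"
proof (rule finite_divisorsI)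
  interpret S': semidomain_set S' by (rule semidomain_set.intro) fact
  have h_dvd: "sd_dvd S' (h d) (h a)" if da: "sd_dvd S d a" for d a
  proof -
    obtain e where "d \<in> sd_star S" "e \<in> sd_star S" "a = d * e"
      using da unfolding sd_dvd_def by blast
    then show ?thesis using h_star h_mult by (intro S'.sd_dvdI[of _ "h e"]) auto
  qed
  fix a assume a: "a \<in> sd_star S"
  obtain rep where fin: "finite (rep ` {e. sd_dvd S' e (h a)})"
    and rep: "\<And>e. sd_dvd S' e (h a) \<Longrightarrow> sd_assoc S' e (rep e)"
    using finite_divisorsE[OF assms(2) h_star[OF a]] by blast
  show "\<exists>\<phi> :: 'a \<Rightarrow> 'b. finite (\<phi> ` {d. sd_dvd S d a}) \<and>
    (\<forall>d1 d2. sd_dvd S d1 a \<longrightarrow> sd_dvd S d2 a \<longrightarrow> \<phi> d1 = \<phi> d2 \<longrightarrow> sd_assoc S d1 d2)"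
  proof (intro exI[of _ "rep \<circ> h"] conjI allI impI)
    have "(rep \<circ> h) ` {d. sd_dvd S d a} \<subseteq> rep ` {e. sd_dvd S' e (h a)}" using h_dvd by auto
    then show "finite ((rep \<circ> h) ` {d. sd_dvd S d a})" using fin finite_subset by blast
    fix d1 d2 assume d: "sd_dvd S d1 a" "sd_dvd S d2 a" "(rep \<circ> h) d1 = (rep \<circ> h) d2"
    then have "sd_assoc S' (h d1) (h d2)"
      using S'.assoc_if_same_rep[OF rep h_dvd[OF d(1)] h_dvd[OF d(2)]] by simp
    moreover have "d1 \<in> sd_star S" "d2 \<in> sd_star S" using d(1,2) by (simp_all add: sd_dvd_def)
    ultimately show "sd_assoc S d1 d2"
      using sd_dvd_reflect[of h S' r, OF h_star r_star r_mult r_h] unfolding sd_assoc_def by blast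
  qed
qed

end

section \<open>Polynomials\<close>

text \<open>This makes polynomials over the fraction field a factorial ring, where prime factorizations
  are available.\<close>

instantiation fract ::
  (idom) "{unique_euclidean_ring, normalization_euclidean_semiring, normalization_semidom_multiplicative}"
begin

definition [simp]: "normalize_fract = (normalize_field :: 'a fract \<Rightarrow> _)"
definition [simp]: "unit_factor_fract = (unit_factor_field :: 'a fract \<Rightarrow> _)"
definition [simp]: "modulo_fract = (mod_field :: 'a fract \<Rightarrow> _)"
definition [simp]: "euclidean_size_fract = (euclidean_size_field :: 'a fract \<Rightarrow> _)"
definition [simp]: "division_segment (x :: 'a fract) = 1"

instance
  by standard (simp_all add: dvd_field_iff field_split_simps split: if_splits)

end

instantiation fract :: (idom) euclidean_ring_gcd
begin

definition gcd_fract :: "'a fract \<Rightarrow> 'a fract \<Rightarrow> 'a fract" where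
  "gcd_fract = Euclidean_Algorithm.gcd"
definition lcm_fract :: "'a fract \<Rightarrow> 'a fract \<Rightarrow> 'a fract" where
  "lcm_fract = Euclidean_Algorithm.lcm"
definition Gcd_fract :: "'a fract set \<Rightarrow> 'a fract" where
  "Gcd_fract = Euclidean_Algorithm.Gcd"
definition Lcm_fract :: "'a fract set \<Rightarrow> 'a fract" where
  "Lcm_fract = Euclidean_Algorithm.Lcm"

instance by standard (simp_all add: gcd_fract_def lcm_fract_def Gcd_fract_def Lcm_fract_def)

end

instance fract :: (idom) field_gcd ..

lemma lead_coeff_fract_poly: "lead_coeff (fract_poly p) = to_fract (lead_coeff p)"
  by (simp add: degree_map_poly coeff_map_poly)

lemma smult_lead_coeff_eq_if_fract_poly_associated:
  fixes p q :: "'a::idom poly"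
  assumes "normalize (fract_poly p) = normalize (fract_poly q)"
  shows "smult (lead_coeff p) q = smult (lead_coeff q) p"
proof -
  obtain u where "is_unit u" "fract_poly q = u * fract_poly p"
    using associatedE2[OF assms] by blast
  then obtain c where c: "fract_poly q = smult c (fract_poly p)"
    by (auto simp: is_unit_poly_iff)
  have "to_fract (lead_coeff q) = lead_coeff (smult c (fract_poly p))"
    by (simp only: c[symmetric] lead_coeff_fract_poly)
  also have "\<dots> = c * to_fract (lead_coeff p)"
    by (simp add: lead_coeff_fract_poly)
  finally have "to_fract (lead_coeff q) = c * to_fract (lead_coeff p)" .
  then have "fract_poly (smult (lead_coeff p) q) = fract_poly (smult (lead_coeff q) p)"
    using c by (simp add: mult.commute)
  then show ?thesis by (simp only: fract_poly_eq_iff)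
qed

context semidomain_set
begin

lemma semidomain_poly: "semidomain (poly_semidomain S)"
  unfolding semidomain_def poly_semidomain_def
  by (auto simp: coeff_mult zero_mem one_mem coeff_1 intro!: add_mem sum_mem mult_mem)

lemma semidomain_set_poly: "semidomain_set (poly_semidomain S)"
  by (rule semidomain_set.intro) (rule semidomain_poly)

lemma const_poly_star: "c \<in> sd_star S \<Longrightarrow> [:c:] \<in> sd_star (poly_semidomain S)"
  by (auto simp: sd_star_iff poly_semidomain_def coeff_pCons zero_mem split: nat.split)

lemma lead_coeff_star: "p \<in> sd_star (poly_semidomain S) \<Longrightarrow> lead_coeff p \<in> sd_star S"
  by (simp add: sd_star_iff poly_semidomain_def)

lemma finite_divisors_of_poly:
  "finite_divisors (poly_semidomain S) \<Longrightarrow> finite_divisors S"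
  by (rule finite_divisors_pullback[OF semidomain_poly _ const_poly_star _ lead_coeff_star])
    (auto simp: lead_coeff_mult sd_assoc_refl)

lemma poly_sd_dvd_if_fract_poly_associated:
  assumes p: "p \<in> sd_star (poly_semidomain S)" and q: "q \<in> sd_star (poly_semidomain S)"
    and associated: "normalize (fract_poly p) = normalize (fract_poly q)"
    and lead: "sd_dvd S (lead_coeff p) (lead_coeff q)"
  shows "sd_dvd (poly_semidomain S) p q"
proof -
  obtain u where u: "u \<in> sd_star S" "lead_coeff q = lead_coeff p * u"
    using lead unfolding sd_dvd_def by blast
  have "smult (lead_coeff p) q = smult (lead_coeff p) (smult u p)"
    using smult_lead_coeff_eq_if_fract_poly_associated[OF associated] u(2) by simp
  moreover have "lead_coeff p \<noteq> 0" using p by (simp add: sd_star_iff)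
  ultimately have "q = smult u p" using smult_cancel by blast
  then have "q = p * [:u:]" by simp
  then show ?thesis using semidomain_set.sd_dvdI[OF semidomain_set_poly p const_poly_star[OF u(1)]] by simp
qed

lemma poly_sd_dvdD:
  assumes "sd_dvd (poly_semidomain S) p q"
  shows "sd_dvd S (lead_coeff p) (lead_coeff q)" "fract_poly p dvd fract_poly q"
proof -
  obtain w where w: "w \<in> sd_star (poly_semidomain S)" "q = p * w"
    and p: "p \<in> sd_star (poly_semidomain S)"
    using assms unfolding sd_dvd_def by blast
  show "sd_dvd S (lead_coeff p) (lead_coeff q)"
    using w(2) by (intro sd_dvdI[OF lead_coeff_star[OF p] lead_coeff_star[OF w(1)]])
      (simp add: lead_coeff_mult)
  show "fract_poly p dvd fract_poly q" using w(2) by simp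
qed

lemma finite_divisors_poly:
  assumes "finite_divisors S"
  shows "finite_divisors (poly_semidomain S)"
proof (rule finite_divisorsI)
  let ?P = "poly_semidomain S"
  interpret P: semidomain_set ?P by (rule semidomain_set_poly)
  fix f assume f: "f \<in> sd_star ?P"
  obtain rep where fin: "finite (rep ` {d. sd_dvd S d (lead_coeff f)})"
    and rep: "\<And>d. sd_dvd S d (lead_coeff f) \<Longrightarrow> sd_assoc S d (rep d)"
    using finite_divisorsE[OF assms lead_coeff_star[OF f]] by blast
  define \<phi> where "\<phi> g = (prime_factorization (fract_poly g), rep (lead_coeff g))" for g
  have nonzero: "fract_poly g \<noteq> 0" if "sd_dvd ?P g f" for g
    using that by (simp add: sd_dvd_def sd_star_iff)
  show "\<exists>\<phi> :: 'a poly \<Rightarrow> 'a fract poly multiset \<times> 'a. finite (\<phi> ` {g. sd_dvd ?P g f}) \<and>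
     (\<forall>g1 g2. sd_dvd ?P g1 f \<longrightarrow> sd_dvd ?P g2 f \<longrightarrow> \<phi> g1 = \<phi> g2 \<longrightarrow> sd_assoc ?P g1 g2)"
  proof (intro exI[of _ \<phi>] conjI allI impI)
    have "\<phi> ` {g. sd_dvd ?P g f} \<subseteq>
        {M. M \<subseteq># prime_factorization (fract_poly f)} \<times> rep ` {d. sd_dvd S d (lead_coeff f)}"
      using poly_sd_dvdD nonzero P.sd_dvd_refl[OF f]
      by (auto simp: \<phi>_def prime_factorization_subset_iff_dvd)
    moreover have "finite ({M. M \<subseteq># prime_factorization (fract_poly f)} \<times>
        rep ` {d. sd_dvd S d (lead_coeff f)})"
      using finite_submultisets fin by blast
    ultimately show "finite (\<phi> ` {g. sd_dvd ?P g f})" using finite_subset by blast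
  next
    fix g1 g2 assume g: "sd_dvd ?P g1 f" "sd_dvd ?P g2 f" "\<phi> g1 = \<phi> g2"
    have "normalize (fract_poly g1) = normalize (fract_poly g2)"
      using g(3) prod_mset_prime_factorization[OF nonzero[OF g(1)]]
        prod_mset_prime_factorization[OF nonzero[OF g(2)]] by (simp add: \<phi>_def)
    moreover have "sd_assoc S (lead_coeff g1) (lead_coeff g2)"
      using assoc_if_same_rep[OF rep poly_sd_dvdD(1)[OF g(1)] poly_sd_dvdD(1)[OF g(2)]] g(3)
      by (simp add: \<phi>_def)
    moreover have "g1 \<in> sd_star ?P" "g2 \<in> sd_star ?P" using g(1,2) by (simp_all add: sd_dvd_def)
    ultimately show "sd_assoc ?P g1 g2"
      using poly_sd_dvd_if_fract_poly_associated unfolding sd_assoc_def by metis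
  qed
qed

end

section \<open>Laurent polynomials\<close>

unbundle fps_syntax

lemma finite_fls_support_iff: "finite {n. f $$ n \<noteq> 0} \<longleftrightarrow> (\<exists>M. \<forall>n>M. f $$ n = 0)"
proof
  assume fin: "finite {n. f $$ n \<noteq> 0}"
  have "f $$ n = 0" if "n > Max (insert 0 {n. f $$ n \<noteq> 0})" for n
  proof (rule ccontr)
    assume "f $$ n \<noteq> 0"
    then have "n \<le> Max (insert 0 {n. f $$ n \<noteq> 0})" using fin by (intro Max_ge) auto
    then show False using that by simp
  qed
  then show "\<exists>M. \<forall>n>M. f $$ n = 0" by blast
next
  assume "\<exists>M. \<forall>n>M. f $$ n = 0"
  then obtain M where M: "\<forall>n>M. f $$ n = 0" by blast
  have "{n. f $$ n \<noteq> 0} \<subseteq> {fls_subdegree f..M}"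
  proof
    fix n assume "n \<in> {n. f $$ n \<noteq> 0}"
    then have "\<not> n < fls_subdegree f" "\<not> n > M" using M fls_eq0_below_subdegree by auto
    then show "n \<in> {fls_subdegree f..M}" by simp
  qed
  then show "finite {n. f $$ n \<noteq> 0}" using finite_subset by blast
qed

lemma fls_mult_nth_eq_0_above:
  fixes f g :: "'a::idom fls"
  assumes "\<forall>n>M. f $$ n = 0" "\<forall>n>N. g $$ n = 0" "n > M + N"
  shows "(f * g) $$ n = 0"
  unfolding fls_times_nth(2)
proof (rule sum.neutral, intro ballI)
  fix i
  show "f $$ i * g $$ (n - i) = 0"
  proof (cases "i > M")
    case False
    then have "n - i > N" using assms(3) by linarith
    then show ?thesis using assms(2) by simp
  qed (use assms(1) in simp)
qed

lemma finite_fls_support_mult: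
  fixes f g :: "'a::idom fls"
  assumes "finite {n. f $$ n \<noteq> 0}" "finite {n. g $$ n \<noteq> 0}"
  shows "finite {n. (f * g) $$ n \<noteq> 0}"
proof -
  obtain M N where "\<forall>n>M. f $$ n = 0" "\<forall>n>N. g $$ n = 0"
    using assms unfolding finite_fls_support_iff by blast
  then have "\<forall>n>M + N. (f * g) $$ n = 0" using fls_mult_nth_eq_0_above by blast
  then show ?thesis unfolding finite_fls_support_iff by blast
qed

lemma laurent_semidomain_iff:
  "f \<in> laurent_semidomain S \<longleftrightarrow> (\<forall>n. f $$ n \<in> S) \<and> (\<exists>M. \<forall>n>M. f $$ n = 0)"
  unfolding laurent_semidomain_def finite_fls_support_iff by blast

text \<open>Unspecified unless f has finite support.\<close>

definition fls_base_poly :: "'a::zero fls \<Rightarrow> 'a poly" where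
  "fls_base_poly f = Abs_poly (\<lambda>n. f $$ (fls_subdegree f + int n))"

lemma coeff_fls_base_poly:
  assumes "finite {n. f $$ n \<noteq> 0}"
  shows "coeff (fls_base_poly f) n = f $$ (fls_subdegree f + int n)"
proof -
  obtain M where M: "\<forall>n>M. f $$ n = 0" using assms unfolding finite_fls_support_iff ..
  have "coeff (fls_base_poly f) = (\<lambda>n. f $$ (fls_subdegree f + int n))"
    unfolding fls_base_poly_def
  proof (rule coeff_Abs_poly)
    fix i assume "i > nat (M - fls_subdegree f)"
    then have "fls_subdegree f + int i > M" by linarith
    then show "f $$ (fls_subdegree f + int i) = 0" using M by blast
  qed
  then show ?thesis by simp
qed

lemma fps_of_fls_base_poly:
  "finite {n. f $$ n \<noteq> 0} \<Longrightarrow> fps_of_poly (fls_base_poly f) = fls_base_factor_to_fps f"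
  by (rule fps_ext) (simp add: coeff_fls_base_poly fls_base_factor_to_fps_nth add.commute)

lemma fls_base_poly_mult:
  fixes f g :: "'a::idom fls"
  assumes "finite {n. f $$ n \<noteq> 0}" "finite {n. g $$ n \<noteq> 0}"
  shows "fls_base_poly (f * g) = fls_base_poly f * fls_base_poly g"
proof -
  have "fps_of_poly (fls_base_poly (f * g)) = fls_base_factor_to_fps (f * g)"
    by (rule fps_of_fls_base_poly[OF finite_fls_support_mult[OF assms]])
  also have "\<dots> = fls_base_factor_to_fps f * fls_base_factor_to_fps g"
    by (rule fls_base_factor_to_fps_mult)
  also have "\<dots> = fps_of_poly (fls_base_poly f * fls_base_poly g)"
    by (simp only: fps_of_poly_mult fps_of_fls_base_poly[OF assms(1)] fps_of_fls_base_poly[OF assms(2)])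
  finally show ?thesis by (simp only: fps_of_poly_eq_iff)
qed

lemma fps_to_fls_base_poly:
  "finite {n. f $$ n \<noteq> 0} \<Longrightarrow> fps_to_fls (fps_of_poly (fls_base_poly f)) = fls_shift (fls_subdegree f) f"
  by (simp only: fps_of_fls_base_poly fps_to_fls_base_factor_to_fps) simp

context semidomain_set
begin

lemma semidomain_laurent: "semidomain (laurent_semidomain S)"
  unfolding semidomain_def
proof (intro conjI ballI)
  show "0 \<in> laurent_semidomain S" "1 \<in> laurent_semidomain S"
    using zero_mem one_mem by (auto simp: laurent_semidomain_def)
  fix f g assume "f \<in> laurent_semidomain S" "g \<in> laurent_semidomain S"
  then obtain M N where M: "\<forall>n>M. f $$ n = 0" and N: "\<forall>n>N. g $$ n = 0"
    and mem: "\<forall>n. f $$ n \<in> S" "\<forall>n. g $$ n \<in> S" unfolding laurent_semidomain_iff by blast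
  show "f + g \<in> laurent_semidomain S"
    unfolding laurent_semidomain_iff using mem M N add_mem by (auto intro!: exI[of _ "max M N"])
  have "(f * g) $$ n \<in> S" for n
    unfolding fls_times_nth(2) using mem by (intro sum_mem mult_mem) auto
  then show "f * g \<in> laurent_semidomain S"
    unfolding laurent_semidomain_iff using fls_mult_nth_eq_0_above[OF M N] by blast
qed

lemma semidomain_set_laurent: "semidomain_set (laurent_semidomain S)"
  by (rule semidomain_set.intro) (rule semidomain_laurent)

lemma fls_X_intpow_star: "fls_X_intpow i \<in> sd_star (laurent_semidomain S)"
proof -
  have "{n. fls_X_intpow i $$ n \<noteq> (0::'a)} \<subseteq> {i}" by auto
  then show ?thesis using zero_mem one_mem finite_subset
    by (auto simp: sd_star_iff laurent_semidomain_def)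
qed

lemma finite_divisors_laurent:
  assumes "finite_divisors (poly_semidomain S)"
  shows "finite_divisors (laurent_semidomain S)"
proof -
  interpret L: semidomain_set "laurent_semidomain S" by (rule semidomain_set_laurent)
  let ?r = "\<lambda>p. fps_to_fls (fps_of_poly p) :: 'a fls"
  have support: "finite {n. f $$ n \<noteq> 0}" if "f \<in> sd_star (laurent_semidomain S)" for f
    using that by (simp add: sd_star_iff laurent_semidomain_def)
  show ?thesis
  proof (rule L.finite_divisors_pullback[OF semidomain_poly assms, where h = fls_base_poly and r = ?r])
    fix f assume f: "f \<in> sd_star (laurent_semidomain S)"
    have "coeff (fls_base_poly f) 0 \<noteq> 0"
      using coeff_fls_base_poly[OF support[OF f], of 0] f by (simp add: sd_star_iff)
    then have "fls_base_poly f \<noteq> 0" by auto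
    then show "fls_base_poly f \<in> sd_star (poly_semidomain S)"
      using f by (auto simp: sd_star_iff poly_semidomain_def laurent_semidomain_def coeff_fls_base_poly)
    have "f = fls_X_intpow (fls_subdegree f) * ?r (fls_base_poly f)"
      "?r (fls_base_poly f) = fls_X_intpow (- fls_subdegree f) * f"
      by (simp_all add: fps_to_fls_base_poly[OF support[OF f]] fls_shifted_times_simps)
    moreover have "?r (fls_base_poly f) \<in> sd_star (laurent_semidomain S)"
      using L.mult_star[OF fls_X_intpow_star[of "- fls_subdegree f"] f] calculation(2) by simp
    ultimately show "sd_assoc (laurent_semidomain S) (?r (fls_base_poly f)) f"
      using f fls_X_intpow_star L.sd_dvdI unfolding sd_assoc_def by (metis mult.commute)
  next
    fix p assume "p \<in> sd_star (poly_semidomain S)"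
    moreover have "\<forall>n>int (degree p). ?r p $$ n = 0" by (auto simp: coeff_eq_0)
    ultimately show "?r p \<in> sd_star (laurent_semidomain S)"
      using zero_mem by (auto simp: sd_star_iff laurent_semidomain_iff poly_semidomain_def)
  qed (simp_all add: support fls_base_poly_mult fps_of_poly_mult fls_times_fps_to_fls)
qed

lemma finite_divisors_of_laurent:
  "finite_divisors (laurent_semidomain S) \<Longrightarrow> finite_divisors S"
proof (rule finite_divisors_pullback[OF semidomain_laurent, where h = fls_const
      and r = "\<lambda>f. f $$ fls_subdegree f"])
  fix c assume "c \<in> sd_star S"
  moreover have "{n. fls_const c $$ n \<noteq> 0} \<subseteq> {0}" by auto
  ultimately show "fls_const c \<in> sd_star (laurent_semidomain S)"
    using zero_mem finite_subset by (auto simp: sd_star_iff laurent_semidomain_def)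
qed (auto simp: sd_star_iff laurent_semidomain_def sd_assoc_refl)

end

theorem theorem4p4:
  fixes S :: "'a::idom set"
  assumes "semidomain S"
  shows "(FFS S \<longleftrightarrow> FFS (poly_semidomain S)) \<and>
         (FFS S \<longleftrightarrow> FFS (laurent_semidomain S))"
proof -
  interpret semidomain_set S by (rule semidomain_set.intro) (rule assms)
  have "finite_divisors S \<longleftrightarrow> finite_divisors (poly_semidomain S)"
    using finite_divisors_poly finite_divisors_of_poly by blast
  moreover have "finite_divisors S \<longleftrightarrow> finite_divisors (laurent_semidomain S)"
    using finite_divisors_poly finite_divisors_laurent finite_divisors_of_laurent by blast
  ultimately show ?thesis
    using FFS_iff_finite_divisors semidomain_set.FFS_iff_finite_divisors[OF semidomain_set_poly]
      semidomain_set.FFS_iff_finite_divisors[OF semidomain_set_laurent] by blast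
qed

end
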